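(* Let $F$ be a posheaf on a locale $X$ such that for all $v\le u$ in $\mathcal{O}(X)$ the restriction map $F(u)\to F(v)$ is surjective and has a left adjoint $l_{v,u}:F(v)\to F(u)$. Then for all $u,v\in\mathcal{O}(X)$ and all $x\in F(v)$, $$\big(l_{v,\,u\vee v}(x)\big)|_u=l_{u\wedge v,\,u}\big(x|_{u\wedge v}\big).$$
   Context: Let $X$ be a locale with frame of opens $\mathcal{O}(X)$. A posheaf on $X$ is a sheaf of sets $F$ with (POS1) each $F(u)$ a poset; (POS2) restriction maps $F(u)\to F(v)$, $x\mapsto x|_v$ ($v\le u$), order-preserving; (POS3) if $u=\bigvee_i u_i$ and $s,t\in F(u)$ satisfy $s|_{u_i}\le t|_{u_i}$ for all $i$, then $s\le t$. A left adjoint of the restriction map $F(u)\to F(v)$ is a monotone map $l_{v,u}:F(v)\to F(u)$ with $l_{v,u}(x)\le y\iff x\le y|_v$ for $x\in F(v)$, $y\in F(u)$. *)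

theory Defs
  imports Main
begin

text \<open>A frame: a complete lattice satisfying the infinite distributive law.
  A locale X is represented by its frame of opens, a type 'a.\<close>

definition frame :: "('a::complete_lattice) itself \<Rightarrow> bool" where
  "frame _ \<longleftrightarrow> (\<forall>(x::'a) Y. inf x (Sup Y) = Sup ((\<lambda>y. inf x y) ` Y))"

text \<open>A presheaf of sets on the frame: sections of F(u) are the elements of
  carrier u; res u v s is the restriction s|_v for v \<le> u.\<close>

definition presheaf :: "('a::complete_lattice \<Rightarrow> 's set) \<Rightarrow> ('a \<Rightarrow> 'a \<Rightarrow> 's \<Rightarrow> 's) \<Rightarrow> bool" where
  "presheaf F res \<longleftrightarrow>
     (\<forall>u v s. v \<le> u \<longrightarrow> s \<in> F u \<longrightarrow> res u v s \<in> F v) \<and>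
     (\<forall>u s. s \<in> F u \<longrightarrow> res u u s = s) \<and>
     (\<forall>u v w s. w \<le> v \<longrightarrow> v \<le> u \<longrightarrow> s \<in> F u \<longrightarrow> res v w (res u v s) = res u w s)"

definition sheaf :: "('a::complete_lattice \<Rightarrow> 's set) \<Rightarrow> ('a \<Rightarrow> 'a \<Rightarrow> 's \<Rightarrow> 's) \<Rightarrow> bool" where
  "sheaf F res \<longleftrightarrow> presheaf F res \<and>
     (\<forall>(U::'a set) (t::'a \<Rightarrow> 's).
        (\<forall>a\<in>U. t a \<in> F a) \<longrightarrow>
        (\<forall>a\<in>U. \<forall>b\<in>U. res a (inf a b) (t a) = res b (inf a b) (t b)) \<longrightarrow>
        (\<exists>!s. s \<in> F (Sup U) \<and> (\<forall>a\<in>U. res (Sup U) a s = t a)))"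

definition posheaf :: "('a::complete_lattice \<Rightarrow> 's set) \<Rightarrow> ('a \<Rightarrow> 'a \<Rightarrow> 's \<Rightarrow> 's)
                        \<Rightarrow> ('a \<Rightarrow> 's \<Rightarrow> 's \<Rightarrow> bool) \<Rightarrow> bool" where
  "posheaf F res le \<longleftrightarrow> sheaf F res \<and>
     (\<forall>u. (\<forall>x\<in>F u. le u x x) \<and>
          (\<forall>x\<in>F u. \<forall>y\<in>F u. le u x y \<longrightarrow> le u y x \<longrightarrow> x = y) \<and>
          (\<forall>x\<in>F u. \<forall>y\<in>F u. \<forall>z\<in>F u. le u x y \<longrightarrow> le u y z \<longrightarrow> le u x z)) \<and>
     (\<forall>u v x y. v \<le> u \<longrightarrow> x \<in> F u \<longrightarrow> y \<in> F u \<longrightarrow> le u x y \<longrightarrow> le v (res u v x) (res u v y)) \<and>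
     (\<forall>(U::'a set) s t. s \<in> F (Sup U) \<longrightarrow> t \<in> F (Sup U) \<longrightarrow>
        (\<forall>a\<in>U. le a (res (Sup U) a s) (res (Sup U) a t)) \<longrightarrow> le (Sup U) s t)"

definition is_left_adjoint :: "('a::complete_lattice \<Rightarrow> 's set) \<Rightarrow> ('a \<Rightarrow> 'a \<Rightarrow> 's \<Rightarrow> 's)
        \<Rightarrow> ('a \<Rightarrow> 's \<Rightarrow> 's \<Rightarrow> bool) \<Rightarrow> 'a \<Rightarrow> 'a \<Rightarrow> ('s \<Rightarrow> 's) \<Rightarrow> bool" where
  "is_left_adjoint F res le v u lv \<longleftrightarrow>
     (\<forall>x\<in>F v. lv x \<in> F u) \<and>
     (\<forall>x\<in>F v. \<forall>x'\<in>F v. le v x x' \<longrightarrow> le u (lv x) (lv x')) \<and>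
     (\<forall>x\<in>F v. \<forall>y\<in>F u. le u (lv x) y \<longleftrightarrow> le v x (res u v y))"

end

theory Submission
  imports Defs
begin

text \<open>Write w = u \<squnion> v and m = u \<sqinter> v. The inequality
  l_{m,u}(x|_m) \<le> (l_{v,w} x)|_u holds in any posheaf: by adjunction it says
  x|_m \<le> (l_{v,w} x)|_m, which is the unit x \<le> (l_{v,w} x)|_v restricted to m.
  Surjectivity of restrictions makes the unit an equality, so the sections x on v
  and l_{m,u}(x|_m) on u agree on m and glue to some y on w. Then
  x \<le> y|_v gives l_{v,w} x \<le> y, and restricting to u yields the reverse
  inequality.\<close>

lemma posheaf_sheaf: "posheaf F res le \<Longrightarrow> sheaf F res"
  unfolding posheaf_def by (elim conjE)

lemma sheaf_presheaf: "sheaf F res \<Longrightarrow> presheaf F res"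
  unfolding sheaf_def by (elim conjE)

lemma posheaf_presheaf: "posheaf F res le \<Longrightarrow> presheaf F res"
  by (intro sheaf_presheaf posheaf_sheaf)

lemma presheaf_res_closed: "presheaf F res \<Longrightarrow> v \<le> u \<Longrightarrow> s \<in> F u \<Longrightarrow> res u v s \<in> F v"
  unfolding presheaf_def by blast

lemma presheaf_res_id: "presheaf F res \<Longrightarrow> s \<in> F u \<Longrightarrow> res u u s = s"
  unfolding presheaf_def by blast

lemma presheaf_res_trans:
  "presheaf F res \<Longrightarrow> w \<le> v \<Longrightarrow> v \<le> u \<Longrightarrow> s \<in> F u \<Longrightarrow> res v w (res u v s) = res u w s"
  unfolding presheaf_def by blast

lemma posheaf_refl: "posheaf F res le \<Longrightarrow> x \<in> F u \<Longrightarrow> le u x x"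
  unfolding posheaf_def by (drule conjunct2, drule conjunct1) blast

lemma posheaf_antisym:
  "posheaf F res le \<Longrightarrow> x \<in> F u \<Longrightarrow> y \<in> F u \<Longrightarrow> le u x y \<Longrightarrow> le u y x \<Longrightarrow> x = y"
  unfolding posheaf_def by (drule conjunct2, drule conjunct1) blast

lemma posheaf_res_mono:
  "posheaf F res le \<Longrightarrow> v \<le> u \<Longrightarrow> x \<in> F u \<Longrightarrow> y \<in> F u \<Longrightarrow> le u x y
    \<Longrightarrow> le v (res u v x) (res u v y)"
  unfolding posheaf_def by (drule conjunct2, drule conjunct2, drule conjunct1) blast

lemma left_adjoint_closed: "is_left_adjoint F res le v u lv \<Longrightarrow> x \<in> F v \<Longrightarrow> lv x \<in> F u"
  unfolding is_left_adjoint_def by blast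

lemma left_adjoint_le_iff:
  "is_left_adjoint F res le v u lv \<Longrightarrow> x \<in> F v \<Longrightarrow> y \<in> F u
    \<Longrightarrow> le u (lv x) y \<longleftrightarrow> le v x (res u v y)"
  unfolding is_left_adjoint_def by blast

lemma left_adjoint_unit:
  assumes "posheaf F res le" "is_left_adjoint F res le v u lv" "x \<in> F v"
  shows "le v x (res u v (lv x))"
  using left_adjoint_le_iff[OF assms(2,3) left_adjoint_closed[OF assms(2,3)]]
    posheaf_refl[OF assms(1) left_adjoint_closed[OF assms(2,3)]] by simp

lemma res_left_adjoint_eq:
  assumes P: "posheaf F res le" and surj: "res w v ` F w = F v"
    and adj: "is_left_adjoint F res le v w lv" and "v \<le> w" and x: "x \<in> F v"
  shows "res w v (lv x) = x"
proof -
  from surj x obtain y where y: "y \<in> F w" "x = res w v y" by blast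
  have lx: "lv x \<in> F w" using left_adjoint_closed[OF adj x] .
  have "le w (lv x) y"
    using left_adjoint_le_iff[OF adj x y(1)] y(2) posheaf_refl[OF P x] by simp
  then have "le v (res w v (lv x)) x"
    using posheaf_res_mono[OF P \<open>v \<le> w\<close> lx y(1)] y(2) by simp
  moreover have "res w v (lv x) \<in> F v"
    using presheaf_res_closed[OF posheaf_presheaf[OF P] \<open>v \<le> w\<close> lx] .
  ultimately show ?thesis
    using posheaf_antisym[OF P _ x] left_adjoint_unit[OF P adj x] by blast
qed

lemma sheaf_glue:
  "sheaf F res \<Longrightarrow> \<forall>a\<in>U. t a \<in> F a
    \<Longrightarrow> \<forall>a\<in>U. \<forall>b\<in>U. res a (inf a b) (t a) = res b (inf a b) (t b)
    \<Longrightarrow> \<exists>s. s \<in> F (Sup U) \<and> (\<forall>a\<in>U. res (Sup U) a s = t a)"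
  unfolding sheaf_def by (drule conjunct2) blast

lemma sheaf_glue_pair:
  assumes sh: "sheaf F res" and s: "s \<in> F u" and t: "t \<in> F v"
    and compat: "res u (inf u v) s = res v (inf u v) t"
  obtains y where "y \<in> F (sup u v)" "res (sup u v) u y = s" "res (sup u v) v y = t"
proof -
  have pre: "presheaf F res" using sheaf_presheaf[OF sh] .
  have st: "s = t" if "u = v"
    using that compat presheaf_res_id[OF pre s] presheaf_res_id[OF pre t] by simp
  define g where "g = (\<lambda>a. if a = u then s else t)"
  have "\<forall>a\<in>{u, v}. g a \<in> F a"
    using s t by (auto simp: g_def)
  moreover have "\<forall>a\<in>{u, v}. \<forall>b\<in>{u, v}. res a (inf a b) (g a) = res b (inf a b) (g b)"
    using compat st by (auto simp: g_def inf_commute)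
  ultimately obtain y where "y \<in> F (Sup {u, v})" "\<forall>a\<in>{u, v}. res (Sup {u, v}) a y = g a"
    using sheaf_glue[OF sh] by blast
  then show ?thesis
    using that st by (auto simp: g_def)
qed

lemma left_adjoint_res_le_res_left_adjoint:
  assumes P: "posheaf F res le" and "u \<le> w" "v \<le> w"
    and adj_w: "is_left_adjoint F res le v w lw"
    and adj_u: "is_left_adjoint F res le (inf u v) u lu"
    and x: "x \<in> F v"
  shows "le u (lu (res v (inf u v) x)) (res w u (lw x))"
proof -
  have pre: "presheaf F res" using posheaf_presheaf[OF P] .
  have m: "inf u v \<le> u" "inf u v \<le> v" by simp_all
  have lx: "lw x \<in> F w" using left_adjoint_closed[OF adj_w x] .
  have "le (inf u v) (res v (inf u v) x) (res v (inf u v) (res w v (lw x)))"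
    using posheaf_res_mono[OF P m(2) x _ left_adjoint_unit[OF P adj_w x]]
      presheaf_res_closed[OF pre \<open>v \<le> w\<close> lx] by blast
  also have "res v (inf u v) (res w v (lw x)) = res u (inf u v) (res w u (lw x))"
    using presheaf_res_trans[OF pre m(1) \<open>u \<le> w\<close> lx] presheaf_res_trans[OF pre m(2) \<open>v \<le> w\<close> lx]
    by simp
  finally show ?thesis
    using left_adjoint_le_iff[OF adj_u presheaf_res_closed[OF pre m(2) x]]
      presheaf_res_closed[OF pre \<open>u \<le> w\<close> lx] by blast
qed

lemma res_left_adjoint_le_left_adjoint_res:
  assumes P: "posheaf F res le"
    and surj: "res u (inf u v) ` F u = F (inf u v)"
    and adj_w: "is_left_adjoint F res le v (sup u v) lw"
    and adj_u: "is_left_adjoint F res le (inf u v) u lu"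
    and x: "x \<in> F v"
  shows "le u (res (sup u v) u (lw x)) (lu (res v (inf u v) x))"
proof -
  let ?w = "sup u v" and ?m = "inf u v"
  have pre: "presheaf F res" using posheaf_presheaf[OF P] .
  have xm: "res v ?m x \<in> F ?m" using presheaf_res_closed[OF pre _ x] by simp
  have b: "lu (res v ?m x) \<in> F u" using left_adjoint_closed[OF adj_u xm] .
  have "res u ?m (lu (res v ?m x)) = res v ?m x"
    using res_left_adjoint_eq[OF P surj adj_u _ xm] by simp
  then obtain y where y: "y \<in> F ?w" "res ?w u y = lu (res v ?m x)" "res ?w v y = x"
    by (rule sheaf_glue_pair[OF posheaf_sheaf[OF P] b x])
  have "le ?w (lw x) y"
    using left_adjoint_le_iff[OF adj_w x y(1)] y(3) posheaf_refl[OF P x] by simp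
  then have "le u (res ?w u (lw x)) (res ?w u y)"
    using posheaf_res_mono[OF P _ left_adjoint_closed[OF adj_w x] y(1)] by simp
  then show ?thesis
    using y(2) by simp
qed

theorem lemma3p1:
  fixes F :: "'a::complete_lattice \<Rightarrow> 's set"
    and res :: "'a \<Rightarrow> 'a \<Rightarrow> 's \<Rightarrow> 's"
    and le :: "'a \<Rightarrow> 's \<Rightarrow> 's \<Rightarrow> bool"
    and l :: "'a \<Rightarrow> 'a \<Rightarrow> 's \<Rightarrow> 's"
  assumes "frame TYPE('a)"
    and P: "posheaf F res le"
    and surj: "\<And>u v. v \<le> u \<Longrightarrow> res u v ` F u = F v"
    and adj: "\<And>u v. v \<le> u \<Longrightarrow> is_left_adjoint F res le v u (l v u)"
    and x: "x \<in> F v"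
  shows "res (sup u v) u (l v (sup u v) x) = l (inf u v) u (res v (inf u v) x)"
proof -
  have pre: "presheaf F res" using posheaf_presheaf[OF P] .
  have adj_w: "is_left_adjoint F res le v (sup u v) (l v (sup u v))" by (simp add: adj)
  have adj_u: "is_left_adjoint F res le (inf u v) u (l (inf u v) u)" by (simp add: adj)
  show ?thesis
  proof (rule posheaf_antisym[OF P])
    show "res (sup u v) u (l v (sup u v) x) \<in> F u"
      using presheaf_res_closed[OF pre _ left_adjoint_closed[OF adj_w x]] by simp
    show "l (inf u v) u (res v (inf u v) x) \<in> F u"
      using left_adjoint_closed[OF adj_u presheaf_res_closed[OF pre _ x]] by simp
    show "le u (res (sup u v) u (l v (sup u v) x)) (l (inf u v) u (res v (inf u v) x))"
      using res_left_adjoint_le_left_adjoint_res[OF P surj adj_w adj_u x] by simp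
    show "le u (l (inf u v) u (res v (inf u v) x)) (res (sup u v) u (l v (sup u v) x))"
      using left_adjoint_res_le_res_left_adjoint[OF P _ _ adj_w adj_u x] by simp
  qed
qed

end
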